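(* Let $H$ be a graph with $V(H)=[k]$ and let $p\in\mathbb{R}[x_1,\ldots,x_k]$ be a polynomial with $p(x)\ge0$ for all $x\in\mathbb{R}^k$. Then the labeled quantum graph $\varphi_H(p)$ is positive, i.e. $t(\varphi_H(p);G,\phi)\ge0$ for every graph $G$ and every map $\phi:[k]\to V(G)$.
   Context: All graphs are finite and simple. A partially labeled graph is a graph in which some vertices carry distinct positive-integer labels; $\mathcal{F}_L$ denotes the set (up to label-preserving isomorphism) of partially labeled graphs whose set of labels is exactly $L$. The product $H_1\cdot H_2$ is the disjoint union with equally labeled vertices identified (multiple edges merged), and $\mathbb{R}[\mathcal{F}_L]$ is the algebra of formal finite real linear combinations of elements of $\mathcal{F}_L$ with this product extended bilinearly. For $F\in\mathcal{F}_L$, a graph $G$ and $\phi:L\to V(G)$, $t(F;G,\phi)$ is the probability that the map sending each labeled vertex with label $\ell$ to $\phi(\ell)$ and each unlabeled vertex to an independent uniformly random vertex of $G$ is a homomorphism; this is extended linearly to $\mathbb{R}[\mathcal{F}_L]$. For a partially labeled graph $F$, ${\operatorname{ind}}(F):=\sum_{F'}(-1)^{|E(F')\setminus E(F)|}F'$, the sum over all partially labeled graphs $F'$ with the same vertex set and labels as $F$ and $E(F')\supseteq E(F)$. Given $H$ with $V(H)=[k]$, regard it as fully labeled (vertex $j$ has label $j$). For $j\in[k]$, $H_j\in\mathcal{F}_{[k]}$ is obtained from $H$ by adding an unlabeled vertex $v$ adjacent exactly to the neighbours of $j$, and $H_j'$ is obtained from $H_j$ by adding the edge $vj$. $\varphi_H:\mathbb{R}[x_1,\ldots,x_k]\to\mathbb{R}[\mathcal{F}_{[k]}]$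 is the unique unital algebra homomorphism (the unit of $\mathbb{R}[\mathcal{F}_{[k]}]$ being the edgeless graph with $k$ vertices labeled $1,\ldots,k$) with $\varphi_H(x_j)={\operatorname{ind}}(H_j)+{\operatorname{ind}}(H_j')$ for all $j\in[k]$. *)

theory Defs
  imports Complex_Main "HOL-Library.Poly_Mapping" "HOL-Library.FuncSet"
begin

text \<open>Vertices of a partially labeled graph with label set exactly [k] = {1..k}:
  the labeled vertex carrying label i is Lab i (i in {1..k}); the unlabeled vertices
  are Unl 0, ..., Unl (n-1).  A partially labeled graph is represented by the pair
  (n, set of edges), each edge a 2-element set of vertices.\<close>

datatype pvert = Lab nat | Unl nat

type_synonym plg = "nat \<times> pvert set set"

definition pverts :: "nat \<Rightarrow> nat \<Rightarrow> pvert set" where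
  "pverts k n = Lab ` {1..k} \<union> Unl ` {0..<n}"

definition all_edges :: "pvert set \<Rightarrow> pvert set set" where
  "all_edges W = {{a, b} | a b. a \<in> W \<and> b \<in> W \<and> a \<noteq> b}"

fun shift_v :: "nat \<Rightarrow> pvert \<Rightarrow> pvert" where
  "shift_v m (Lab i) = Lab i"
| "shift_v m (Unl i) = Unl (i + m)"

text \<open>Product: disjoint union, equally labeled vertices identified, multiple edges merged.\<close>
definition gprod :: "plg \<Rightarrow> plg \<Rightarrow> plg" where
  "gprod F1 F2 = (fst F1 + fst F2, snd F1 \<union> (\<lambda>e. shift_v (fst F1) ` e) ` snd F2)"

type_synonym qgraph = "plg \<Rightarrow> real"

definition qsupp :: "qgraph \<Rightarrow> plg set" where
  "qsupp q = {F. q F \<noteq> 0}"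

definition qunit :: qgraph where
  "qunit = (\<lambda>F. if F = (0, {}) then 1 else 0)"

definition qadd :: "qgraph \<Rightarrow> qgraph \<Rightarrow> qgraph" where
  "qadd q1 q2 = (\<lambda>F. q1 F + q2 F)"

definition qmult :: "qgraph \<Rightarrow> qgraph \<Rightarrow> qgraph" where
  "qmult q1 q2 = (\<lambda>F. \<Sum>P \<in> {(F1, F2). F1 \<in> qsupp q1 \<and> F2 \<in> qsupp q2 \<and> gprod F1 F2 = F}.
                        q1 (fst P) * q2 (snd P))"

primrec qpow :: "qgraph \<Rightarrow> nat \<Rightarrow> qgraph" where
  "qpow q 0 = qunit"
| "qpow q (Suc n) = qmult q (qpow q n)"

definition ind :: "nat \<Rightarrow> plg \<Rightarrow> qgraph" where
  "ind k F = (\<lambda>F'. if fst F' = fst F \<and> snd F \<subseteq> snd F' \<and> snd F' \<subseteq> all_edges (pverts k (fst F))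
                   then (-1) ^ card (snd F' - snd F) else 0)"

definition is_graph :: "'v set \<Rightarrow> ('v \<Rightarrow> 'v \<Rightarrow> bool) \<Rightarrow> bool" where
  "is_graph V E \<longleftrightarrow> finite V \<and> V \<noteq> {} \<and> (\<forall>u v. E u v \<longrightarrow> E v u) \<and> (\<forall>u. \<not> E u u)
     \<and> (\<forall>u v. E u v \<longrightarrow> u \<in> V \<and> v \<in> V)"

definition is_hom :: "('v \<Rightarrow> 'v \<Rightarrow> bool) \<Rightarrow> pvert set set \<Rightarrow> (pvert \<Rightarrow> 'v) \<Rightarrow> bool" where
  "is_hom E EF f \<longleftrightarrow> (\<forall>a b. {a, b} \<in> EF \<longrightarrow> E (f a) (f b))"

text \<open>t(F;G,phi): probability that the map sending Lab i to phi i and the unlabeled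
  vertices to independent uniform random vertices of G is a homomorphism.\<close>
definition tdens :: "'v set \<Rightarrow> ('v \<Rightarrow> 'v \<Rightarrow> bool) \<Rightarrow> (nat \<Rightarrow> 'v) \<Rightarrow> plg \<Rightarrow> real" where
  "tdens V E \<phi> F =
     real (card {\<psi> \<in> {0..<fst F} \<rightarrow>\<^sub>E V.
                 is_hom E (snd F) (\<lambda>x. case x of Lab i \<Rightarrow> \<phi> i | Unl j \<Rightarrow> \<psi> j)})
     / real (card V) ^ fst F"

definition tq :: "'v set \<Rightarrow> ('v \<Rightarrow> 'v \<Rightarrow> bool) \<Rightarrow> (nat \<Rightarrow> 'v) \<Rightarrow> qgraph \<Rightarrow> real" where
  "tq V E \<phi> q = (\<Sum>F \<in> qsupp q. q F * tdens V E \<phi> F)"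

text \<open>H is given by a symmetric irreflexive adjacency relation A on {1..k}.\<close>
definition HE :: "(nat \<Rightarrow> nat \<Rightarrow> bool) \<Rightarrow> pvert set set" where
  "HE A = {{Lab i, Lab j} | i j. A i j}"

definition Hj :: "(nat \<Rightarrow> nat \<Rightarrow> bool) \<Rightarrow> nat \<Rightarrow> plg" where
  "Hj A j = (1, HE A \<union> {{Unl 0, Lab i} | i. A j i})"

definition Hj' :: "(nat \<Rightarrow> nat \<Rightarrow> bool) \<Rightarrow> nat \<Rightarrow> plg" where
  "Hj' A j = (1, snd (Hj A j) \<union> {{Unl 0, Lab j}})"

definition Xq :: "nat \<Rightarrow> (nat \<Rightarrow> nat \<Rightarrow> bool) \<Rightarrow> nat \<Rightarrow> qgraph" where
  "Xq k A j = qadd (ind k (Hj A j)) (ind k (Hj' A j))"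

text \<open>Polynomials in R[x_1..x_k]: finitely supported maps from monomials (exponent
  vectors) to coefficients.\<close>
type_synonym mpoly = "(nat \<Rightarrow>\<^sub>0 nat) \<Rightarrow>\<^sub>0 real"

definition mono_eval :: "(nat \<Rightarrow>\<^sub>0 nat) \<Rightarrow> (nat \<Rightarrow> real) \<Rightarrow> real" where
  "mono_eval m x = (\<Prod>i \<in> Poly_Mapping.keys m. x i ^ Poly_Mapping.lookup m i)"

definition mpoly_eval :: "mpoly \<Rightarrow> (nat \<Rightarrow> real) \<Rightarrow> real" where
  "mpoly_eval p x = (\<Sum>m \<in> Poly_Mapping.keys p. Poly_Mapping.lookup p m * mono_eval m x)"

text \<open>Image of the monomial x^m = prod_j x_j^(m_j) under the unital algebra hom phi_H.\<close>
definition qmono :: "nat \<Rightarrow> (nat \<Rightarrow> nat \<Rightarrow> bool) \<Rightarrow> (nat \<Rightarrow>\<^sub>0 nat) \<Rightarrow> qgraph" where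
  "qmono k A m = foldr (\<lambda>j acc. qmult (qpow (Xq k A j) (Poly_Mapping.lookup m j)) acc) [1..<Suc k] qunit"

definition phiH :: "nat \<Rightarrow> (nat \<Rightarrow> nat \<Rightarrow> bool) \<Rightarrow> mpoly \<Rightarrow> qgraph" where
  "phiH k A p = (\<lambda>F. \<Sum>m \<in> Poly_Mapping.keys p. Poly_Mapping.lookup p m * qmono k A m F)"

end

theory Submission imports Defs begin

text \<open>The homomorphism density t(-;G,\<phi>) is multiplicative on products of partially labeled
  graphs (the unlabeled vertices of the two factors are chosen independently) and it is
  linear, so it is a unital algebra homomorphism on quantum graphs.  Hence
  t(phi_H(p);G,\<phi>) = p(y) with y_j = t(phi_H(x_j);G,\<phi>), which is nonnegative because p is.\<close>

lemma is_hom_Un: "is_hom E (X \<union> Y) f \<longleftrightarrow> is_hom E X f \<and> is_hom E Y f"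
  unfolding is_hom_def by blast

lemma is_hom_cong:
  "(\<And>e x. e \<in> EF \<Longrightarrow> x \<in> e \<Longrightarrow> f x = g x) \<Longrightarrow> is_hom E EF f = is_hom E EF g"
  unfolding is_hom_def by (metis insertI1 insert_commute)

lemma is_hom_image:
  assumes "\<forall>e\<in>EF. \<exists>c d. e = {c, d}"
  shows "is_hom E ((\<lambda>e. h ` e) ` EF) f \<longleftrightarrow> is_hom E EF (f \<circ> h)"
proof
  assume hom: "is_hom E ((\<lambda>e. h ` e) ` EF) f"
  show "is_hom E EF (f \<circ> h)" unfolding is_hom_def
  proof (intro allI impI)
    fix a b assume "{a, b} \<in> EF"
    then have "{h a, h b} \<in> (\<lambda>e. h ` e) ` EF" by (metis image_empty image_insert imageI)
    then show "E ((f \<circ> h) a) ((f \<circ> h) b)" using hom unfolding is_hom_def by simp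
  qed
next
  assume hom: "is_hom E EF (f \<circ> h)"
  show "is_hom E ((\<lambda>e. h ` e) ` EF) f" unfolding is_hom_def
  proof (intro allI impI)
    fix a b assume "{a, b} \<in> (\<lambda>e. h ` e) ` EF"
    then obtain c d where cd: "{c, d} \<in> EF" "{a, b} = {h c, h d}" using assms by force
    have "E (f (h c)) (f (h d))" "E (f (h d)) (f (h c))"
      using hom cd(1) unfolding is_hom_def comp_def by (metis insert_commute)+
    with cd(2) show "E (f a) (f b)" by (auto simp: doubleton_eq_iff)
  qed
qed

definition labeled_map :: "(nat \<Rightarrow> 'v) \<Rightarrow> (nat \<Rightarrow> 'v) \<Rightarrow> pvert \<Rightarrow> 'v" where
  "labeled_map \<phi> \<psi> x = (case x of Lab i \<Rightarrow> \<phi> i | Unl j \<Rightarrow> \<psi> j)"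

definition hom_extensions ::
    "'v set \<Rightarrow> ('v \<Rightarrow> 'v \<Rightarrow> bool) \<Rightarrow> (nat \<Rightarrow> 'v) \<Rightarrow> nat \<Rightarrow> pvert set set \<Rightarrow> (nat \<Rightarrow> 'v) set" where
  "hom_extensions V E \<phi> n EF = {\<psi> \<in> {0..<n} \<rightarrow>\<^sub>E V. is_hom E EF (labeled_map \<phi> \<psi>)}"

lemma tdens_eq_card_hom_extensions:
  "tdens V E \<phi> F = real (card (hom_extensions V E \<phi> (fst F) (snd F))) / real (card V) ^ fst F"
  unfolding tdens_def hom_extensions_def labeled_map_def by simp

definition plg_wf :: "nat \<Rightarrow> plg \<Rightarrow> bool" where
  "plg_wf k F \<longleftrightarrow> snd F \<subseteq> all_edges (pverts k (fst F))"

lemma all_edges_doubleton: "e \<in> all_edges W \<Longrightarrow> \<exists>c d. e = {c, d}"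
  unfolding all_edges_def by auto

lemma is_hom_labeled_map_restrict:
  assumes "EF \<subseteq> all_edges (pverts k n)"
  shows "is_hom E EF (labeled_map \<phi> \<psi>) = is_hom E EF (labeled_map \<phi> (restrict \<psi> {0..<n}))"
proof (rule is_hom_cong)
  fix e x assume "e \<in> EF" "x \<in> e"
  then have "x \<in> pverts k n" using assms unfolding all_edges_def by auto
  then show "labeled_map \<phi> \<psi> x = labeled_map \<phi> (restrict \<psi> {0..<n}) x"
    unfolding pverts_def labeled_map_def by auto
qed

lemma labeled_map_comp_shift_v:
  "labeled_map \<phi> \<psi> \<circ> shift_v m = labeled_map \<phi> (\<lambda>j. \<psi> (j + m))"
proof
  fix x show "(labeled_map \<phi> \<psi> \<circ> shift_v m) x = labeled_map \<phi> (\<lambda>j. \<psi> (j + m)) x"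
    by (cases x) (simp_all add: labeled_map_def)
qed

lemma is_hom_gprod_iff:
  assumes "E1 \<subseteq> all_edges (pverts k n1)" and "E2 \<subseteq> all_edges (pverts k n2)"
  shows "is_hom E (E1 \<union> (\<lambda>e. shift_v n1 ` e) ` E2) (labeled_map \<phi> \<psi>) \<longleftrightarrow>
     is_hom E E1 (labeled_map \<phi> (restrict \<psi> {0..<n1})) \<and>
     is_hom E E2 (labeled_map \<phi> (restrict (\<lambda>j. \<psi> (j + n1)) {0..<n2}))"
proof -
  have "is_hom E ((\<lambda>e. shift_v n1 ` e) ` E2) (labeled_map \<phi> \<psi>)
      = is_hom E E2 (labeled_map \<phi> (\<lambda>j. \<psi> (j + n1)))"
    using assms(2) all_edges_doubleton
    by (subst is_hom_image) (auto simp: labeled_map_comp_shift_v)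
  moreover have "is_hom E E1 (labeled_map \<phi> \<psi>) = is_hom E E1 (labeled_map \<phi> (restrict \<psi> {0..<n1}))"
    by (rule is_hom_labeled_map_restrict[OF assms(1)])
  moreover have "is_hom E E2 (labeled_map \<phi> (\<lambda>j. \<psi> (j + n1)))
      = is_hom E E2 (labeled_map \<phi> (restrict (\<lambda>j. \<psi> (j + n1)) {0..<n2}))"
    by (rule is_hom_labeled_map_restrict[OF assms(2)])
  ultimately show ?thesis by (simp only: is_hom_Un)
qed

lemma split_PiE_bij:
  fixes m n :: nat
  shows "bij_betw (\<lambda>\<psi>. (restrict \<psi> {0..<m}, restrict (\<lambda>j. \<psi> (j + m)) {0..<n}))
     ({0..<m + n} \<rightarrow>\<^sub>E V) (({0..<m} \<rightarrow>\<^sub>E V) \<times> ({0..<n} \<rightarrow>\<^sub>E V))"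
  by (rule bij_betw_byWitness[where f' = "\<lambda>(\<psi>\<^sub>1, \<psi>\<^sub>2) j.
      if j < m then \<psi>\<^sub>1 j else if j < m + n then \<psi>\<^sub>2 (j - m) else undefined"])
    (auto simp: PiE_iff extensional_def)

lemma card_hom_extensions_gprod:
  assumes "E1 \<subseteq> all_edges (pverts k n1)" and "E2 \<subseteq> all_edges (pverts k n2)"
  shows "card (hom_extensions V E \<phi> (n1 + n2) (E1 \<union> (\<lambda>e. shift_v n1 ` e) ` E2))
       = card (hom_extensions V E \<phi> n1 E1) * card (hom_extensions V E \<phi> n2 E2)"
proof -
  have "bij_betw (\<lambda>\<psi>. (restrict \<psi> {0..<n1}, restrict (\<lambda>j. \<psi> (j + n1)) {0..<n2}))
      (hom_extensions V E \<phi> (n1 + n2) (E1 \<union> (\<lambda>e. shift_v n1 ` e) ` E2))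
      {\<psi>s \<in> ({0..<n1} \<rightarrow>\<^sub>E V) \<times> ({0..<n2} \<rightarrow>\<^sub>E V).
         is_hom E E1 (labeled_map \<phi> (fst \<psi>s)) \<and> is_hom E E2 (labeled_map \<phi> (snd \<psi>s))}"
    unfolding hom_extensions_def
    by (rule bij_betw_Collect[OF split_PiE_bij]) (simp add: is_hom_gprod_iff[OF assms])
  moreover have "{\<psi>s \<in> ({0..<n1} \<rightarrow>\<^sub>E V) \<times> ({0..<n2} \<rightarrow>\<^sub>E V).
         is_hom E E1 (labeled_map \<phi> (fst \<psi>s)) \<and> is_hom E E2 (labeled_map \<phi> (snd \<psi>s))}
      = hom_extensions V E \<phi> n1 E1 \<times> hom_extensions V E \<phi> n2 E2"
    unfolding hom_extensions_def by auto
  ultimately show ?thesis by (simp add: bij_betw_same_card card_cartesian_product)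
qed

lemma tdens_gprod:
  assumes "plg_wf k F1" and "plg_wf k F2"
  shows "tdens V E \<phi> (gprod F1 F2) = tdens V E \<phi> F1 * tdens V E \<phi> F2"
  using card_hom_extensions_gprod[of "snd F1" k "fst F1" "snd F2" "fst F2" V E \<phi>] assms
  unfolding tdens_eq_card_hom_extensions gprod_def plg_wf_def by (simp add: power_add)

lemma shift_v_in_pverts: "a \<in> pverts k n2 \<Longrightarrow> shift_v n1 a \<in> pverts k (n1 + n2)"
  unfolding pverts_def by (cases a) auto

lemma inj_shift_v: "inj (shift_v m)"
proof (rule injI)
  fix a b show "shift_v m a = shift_v m b \<Longrightarrow> a = b" by (cases a; cases b) auto
qed

lemma plg_wf_gprod:
  assumes "plg_wf k F1" and "plg_wf k F2"
  shows "plg_wf k (gprod F1 F2)"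
  unfolding plg_wf_def
proof
  fix e assume "e \<in> snd (gprod F1 F2)"
  then consider "e \<in> snd F1" | e' where "e' \<in> snd F2" "e = shift_v (fst F1) ` e'"
    unfolding gprod_def by auto
  then show "e \<in> all_edges (pverts k (fst (gprod F1 F2)))"
  proof cases
    case 1
    moreover have "pverts k (fst F1) \<subseteq> pverts k (fst (gprod F1 F2))"
      unfolding pverts_def gprod_def by auto
    ultimately show ?thesis using assms(1) unfolding all_edges_def plg_wf_def by blast
  next
    case 2
    then obtain a b where ab: "e = {shift_v (fst F1) a, shift_v (fst F1) b}"
      "a \<in> pverts k (fst F2)" "b \<in> pverts k (fst F2)" "a \<noteq> b"
      using assms(2) unfolding all_edges_def plg_wf_def by auto
    have "shift_v (fst F1) a \<noteq> shift_v (fst F1) b" using ab(4) inj_shift_v by (auto dest: injD)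
    moreover have "shift_v (fst F1) a \<in> pverts k (fst (gprod F1 F2))"
      and "shift_v (fst F1) b \<in> pverts k (fst (gprod F1 F2))"
      using ab(2,3) shift_v_in_pverts unfolding gprod_def by auto
    ultimately show ?thesis using ab(1) unfolding all_edges_def by blast
  qed
qed

definition qgraph_wf :: "nat \<Rightarrow> qgraph \<Rightarrow> bool" where
  "qgraph_wf k q \<longleftrightarrow> finite (qsupp q) \<and> (\<forall>F\<in>qsupp q. plg_wf k F)"

lemma tq_eq_sum_superset:
  assumes "finite S" "qsupp q \<subseteq> S"
  shows "tq V E \<phi> q = (\<Sum>F\<in>S. q F * tdens V E \<phi> F)"
  unfolding tq_def by (rule sum.mono_neutral_left) (use assms in \<open>auto simp: qsupp_def\<close>)

lemma qsupp_qmult_subset: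
  "qsupp (qmult q1 q2) \<subseteq> (\<lambda>(F1, F2). gprod F1 F2) ` (qsupp q1 \<times> qsupp q2)"
proof
  fix F assume F: "F \<in> qsupp (qmult q1 q2)"
  show "F \<in> (\<lambda>(F1, F2). gprod F1 F2) ` (qsupp q1 \<times> qsupp q2)"
  proof (rule ccontr)
    assume "F \<notin> (\<lambda>(F1, F2). gprod F1 F2) ` (qsupp q1 \<times> qsupp q2)"
    then have "{(F1, F2). F1 \<in> qsupp q1 \<and> F2 \<in> qsupp q2 \<and> gprod F1 F2 = F} = {}" by force
    then have "qmult q1 q2 F = 0" unfolding qmult_def by (simp only: sum.empty)
    with F show False unfolding qsupp_def by simp
  qed
qed

lemma qgraph_wf_qmult: "qgraph_wf k q1 \<Longrightarrow> qgraph_wf k q2 \<Longrightarrow> qgraph_wf k (qmult q1 q2)"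
  unfolding qgraph_wf_def
  using qsupp_qmult_subset[of q1 q2] plg_wf_gprod
  by (auto intro: finite_subset)

lemma tq_qmult:
  assumes "qgraph_wf k q1" and "qgraph_wf k q2"
  shows "tq V E \<phi> (qmult q1 q2) = tq V E \<phi> q1 * tq V E \<phi> q2"
proof -
  define P where "P = qsupp q1 \<times> qsupp q2"
  define g where "g = (\<lambda>(F1, F2). gprod F1 F2)"
  have "finite P" using assms unfolding P_def qgraph_wf_def by auto
  have qmult_eq: "qmult q1 q2 F = (\<Sum>x\<in>{x\<in>P. g x = F}. q1 (fst x) * q2 (snd x))" for F
    unfolding qmult_def P_def g_def by (rule sum.cong) auto
  have "tq V E \<phi> (qmult q1 q2) = (\<Sum>F\<in>g ` P. qmult q1 q2 F * tdens V E \<phi> F)"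
    using \<open>finite P\<close> qsupp_qmult_subset unfolding P_def g_def by (intro tq_eq_sum_superset) auto
  also have "\<dots> = (\<Sum>F\<in>g ` P. \<Sum>x\<in>{x\<in>P. g x = F}. q1 (fst x) * q2 (snd x) * tdens V E \<phi> (g x))"
    unfolding qmult_eq sum_distrib_right by (rule sum.cong) auto
  also have "\<dots> = (\<Sum>x\<in>P. q1 (fst x) * q2 (snd x) * tdens V E \<phi> (g x))"
    by (rule sum.image_gen[symmetric]) (rule \<open>finite P\<close>)
  also have "\<dots> = (\<Sum>x\<in>P. (q1 (fst x) * tdens V E \<phi> (fst x)) * (q2 (snd x) * tdens V E \<phi> (snd x)))"
    using assms unfolding P_def g_def qgraph_wf_def
    by (intro sum.cong) (auto simp: tdens_gprod[of k] mult_ac)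
  also have "\<dots> = tq V E \<phi> q1 * tq V E \<phi> q2"
    unfolding tq_def sum_product P_def sum.cartesian_product by (simp add: case_prod_beta)
  finally show ?thesis .
qed

lemma qsupp_qunit: "qsupp qunit = {(0, {})}"
  unfolding qsupp_def qunit_def by auto

lemma qgraph_wf_qunit: "qgraph_wf k qunit"
  unfolding qgraph_wf_def plg_wf_def qsupp_qunit by auto

lemma tq_qunit: "tq V E \<phi> qunit = 1"
proof -
  have "hom_extensions V E \<phi> 0 {} = {\<lambda>_. undefined}"
    unfolding hom_extensions_def is_hom_def by auto
  then show ?thesis
    unfolding tq_def qsupp_qunit tdens_eq_card_hom_extensions by (simp add: qunit_def)
qed

lemma qgraph_wf_qpow: "qgraph_wf k q \<Longrightarrow> qgraph_wf k (qpow q n)"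
  by (induction n) (auto simp: qgraph_wf_qunit qgraph_wf_qmult)

lemma tq_qpow: "qgraph_wf k q \<Longrightarrow> tq V E \<phi> (qpow q n) = tq V E \<phi> q ^ n"
  by (induction n) (auto simp: tq_qunit tq_qmult qgraph_wf_qpow)

lemma qgraph_wf_qadd:
  assumes "qgraph_wf k q1" and "qgraph_wf k q2"
  shows "qgraph_wf k (qadd q1 q2)"
proof -
  have "qsupp (qadd q1 q2) \<subseteq> qsupp q1 \<union> qsupp q2" unfolding qsupp_def qadd_def by auto
  with assms show ?thesis unfolding qgraph_wf_def by (meson UnE finite_Un finite_subset subsetD)
qed

lemma finite_all_edges:
  assumes "finite W"
  shows "finite (all_edges W)"
proof -
  have "all_edges W \<subseteq> (\<lambda>(a, b). {a, b}) ` (W \<times> W)" unfolding all_edges_def by auto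
  with assms show ?thesis by (meson finite_SigmaI finite_imageI finite_subset)
qed

lemma qgraph_wf_ind: "qgraph_wf k (ind k F)"
proof -
  have supp: "qsupp (ind k F) \<subseteq> {fst F} \<times> Pow (all_edges (pverts k (fst F)))"
    unfolding qsupp_def ind_def by (auto split: if_splits)
  have "finite (pverts k (fst F))" unfolding pverts_def by auto
  then have "finite ({fst F} \<times> Pow (all_edges (pverts k (fst F))))" using finite_all_edges by auto
  with supp show ?thesis unfolding qgraph_wf_def plg_wf_def using finite_subset by fastforce
qed

lemma qgraph_wf_Xq: "qgraph_wf k (Xq k A j)"
  unfolding Xq_def by (intro qgraph_wf_qadd qgraph_wf_ind)

lemma qgraph_wf_and_tq_foldr_qpow:
  fixes q :: "nat \<Rightarrow> qgraph" and e :: "nat \<Rightarrow> nat"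
  assumes "\<And>j. qgraph_wf k (q j)"
  shows "qgraph_wf k (foldr (\<lambda>j acc. qmult (qpow (q j) (e j)) acc) js qunit) \<and>
    tq V E \<phi> (foldr (\<lambda>j acc. qmult (qpow (q j) (e j)) acc) js qunit)
      = (\<Prod>j\<leftarrow>js. tq V E \<phi> (q j) ^ e j)"
  by (induction js) (simp_all add: assms qgraph_wf_qunit tq_qunit qgraph_wf_qmult tq_qmult[of k]
      qgraph_wf_qpow tq_qpow[of k])

lemma qgraph_wf_qmono: "qgraph_wf k (qmono k A m)"
  unfolding qmono_def using qgraph_wf_and_tq_foldr_qpow[where q = "Xq k A", OF qgraph_wf_Xq] by blast

lemma tq_qmono:
  assumes "Poly_Mapping.keys m \<subseteq> {1..k}"
  shows "tq V E \<phi> (qmono k A m) = mono_eval m (\<lambda>j. tq V E \<phi> (Xq k A j))"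
proof -
  define y where "y = (\<lambda>j. tq V E \<phi> (Xq k A j))"
  have "tq V E \<phi> (qmono k A m) = (\<Prod>j\<leftarrow>[1..<Suc k]. y j ^ Poly_Mapping.lookup m j)"
    unfolding qmono_def y_def using qgraph_wf_and_tq_foldr_qpow[where q = "Xq k A", OF qgraph_wf_Xq] by blast
  also have "\<dots> = (\<Prod>j\<in>set [1..<Suc k]. y j ^ Poly_Mapping.lookup m j)"
    by (rule prod.distinct_set_conv_list[symmetric]) simp
  also have "\<dots> = (\<Prod>j\<in>{1..k}. y j ^ Poly_Mapping.lookup m j)"
    by (simp only: set_upt atLeastLessThanSuc_atLeastAtMost)
  also have "\<dots> = mono_eval m y"
    unfolding mono_eval_def
    by (rule prod.mono_neutral_right) (use assms in \<open>auto simp: in_keys_iff\<close>)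
  finally show ?thesis unfolding y_def .
qed

lemma tq_sum:
  assumes "finite K" and "\<And>m. m \<in> K \<Longrightarrow> finite (qsupp (q m))"
  shows "tq V E \<phi> (\<lambda>F. \<Sum>m\<in>K. c m * q m F) = (\<Sum>m\<in>K. c m * tq V E \<phi> (q m))"
proof -
  define S where "S = (\<Union>m\<in>K. qsupp (q m))"
  have "finite S" using assms unfolding S_def by blast
  have "qsupp (\<lambda>F. \<Sum>m\<in>K. c m * q m F) \<subseteq> S"
    unfolding S_def qsupp_def by (auto intro: ccontr elim: sum.not_neutral_contains_not_neutral)
  then have "tq V E \<phi> (\<lambda>F. \<Sum>m\<in>K. c m * q m F) = (\<Sum>F\<in>S. (\<Sum>m\<in>K. c m * q m F) * tdens V E \<phi> F)"
    by (rule tq_eq_sum_superset[OF \<open>finite S\<close>])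
  also have "\<dots> = (\<Sum>m\<in>K. c m * (\<Sum>F\<in>S. q m F * tdens V E \<phi> F))"
    by (simp add: sum_distrib_right sum_distrib_left mult.assoc sum.swap[of _ S])
  also have "\<dots> = (\<Sum>m\<in>K. c m * tq V E \<phi> (q m))"
  proof (rule sum.cong[OF refl])
    fix m assume "m \<in> K"
    then have "qsupp (q m) \<subseteq> S" unfolding S_def by auto
    then show "c m * (\<Sum>F\<in>S. q m F * tdens V E \<phi> F) = c m * tq V E \<phi> (q m)"
      by (simp add: tq_eq_sum_superset[OF \<open>finite S\<close>])
  qed
  finally show ?thesis .
qed

lemma tq_phiH:
  assumes "\<forall>m \<in> Poly_Mapping.keys p. Poly_Mapping.keys m \<subseteq> {1..k}"
  shows "tq V E \<phi> (phiH k A p) = mpoly_eval p (\<lambda>j. tq V E \<phi> (Xq k A j))"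
proof -
  have "tq V E \<phi> (phiH k A p)
      = (\<Sum>m\<in>Poly_Mapping.keys p. Poly_Mapping.lookup p m * tq V E \<phi> (qmono k A m))"
    unfolding phiH_def by (rule tq_sum) (use qgraph_wf_qmono in \<open>auto simp: qgraph_wf_def\<close>)
  also have "\<dots> = mpoly_eval p (\<lambda>j. tq V E \<phi> (Xq k A j))"
    unfolding mpoly_eval_def using assms by (intro sum.cong) (simp_all add: tq_qmono)
  finally show ?thesis .
qed

theorem lemma3p2:
  fixes k :: nat and A :: "nat \<Rightarrow> nat \<Rightarrow> bool" and p :: mpoly
    and V :: "'v set" and E :: "'v \<Rightarrow> 'v \<Rightarrow> bool" and \<phi> :: "nat \<Rightarrow> 'v"
  assumes H_sym: "\<forall>i j. A i j \<longrightarrow> A j i"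
    and H_irrefl: "\<forall>i. \<not> A i i"
    and H_verts: "\<forall>i j. A i j \<longrightarrow> i \<in> {1..k} \<and> j \<in> {1..k}"
    and p_vars: "\<forall>m \<in> Poly_Mapping.keys p. Poly_Mapping.keys m \<subseteq> {1..k}"
    and p_nonneg: "\<forall>x. mpoly_eval p x \<ge> 0"
    and G: "is_graph V E"
    and phi: "\<phi> ` {1..k} \<subseteq> V"
  shows "tq V E \<phi> (phiH k A p) \<ge> 0"
  using p_nonneg by (simp add: tq_phiH[OF p_vars])

end
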